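(* Let $\mathbf X$ be a random variable with values in $\mathcal X$ and density $p(\mathbf x)$, and let $\mathcal A$ be a finite set. For Q-functions $Q_0,Q_1:\mathcal X\times\mathcal A\to(0,\infty)$ and a real number $\gamma\notin\{0,-1\}$ define $$H_\gamma(Q_0,Q_1)=-\frac1\gamma\,\mathbb E\Bigg[\frac{\sum_{a\in\mathcal A}Q_0(\mathbf X,a)\,Q_1(\mathbf X,a)^{\gamma}}{\big\{\sum_{a\in\mathcal A}Q_1(\mathbf X,a)^{1+\gamma}\big\}^{\frac{\gamma}{1+\gamma}}}\Bigg],\qquad D_\gamma(Q_0,Q_1)=H_\gamma(Q_0,Q_1)-H_\gamma(Q_0,Q_0),$$ assuming all these expectations are finite. Then $D_\gamma(Q_0,Q_1)\ge 0$, with equality if and only if $Q_0\sim Q_1$.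
   Context: A Q-function is a measurable function $Q:\mathcal X\times\mathcal A\to(0,\infty)$. Policy equivalence: $Q_0\sim Q_1$ means there exists a function $\eta:\mathcal X\to(0,\infty)$ such that $Q_1(\mathbf x,a)=\eta(\mathbf x)Q_0(\mathbf x,a)$ for all $a\in\mathcal A$ and (almost) every $\mathbf x\in\mathcal X$, where "almost every" is with respect to the distribution of $\mathbf X$. $\mathbb E$ is expectation with respect to $\mathbf X$. *)

theory Defs
  imports "HOL-Probability.Probability"
begin

text \<open>The distribution of the random variable X on the state space is modelled by a
probability measure P on the type 'x; expectations over X are Lebesgue integrals
w.r.t. P. The finite action set is a finite type 'a.\<close>

definition Q_function :: "'x measure \<Rightarrow> ('x \<Rightarrow> 'a \<Rightarrow> real) \<Rightarrow> bool" where
  "Q_function P Q \<longleftrightarrow> (\<forall>a. (\<lambda>x. Q x a) \<in> borel_measurable P) \<and> (\<forall>x a. Q x a > 0)"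

definition policy_equiv :: "'x measure \<Rightarrow> ('x \<Rightarrow> 'a \<Rightarrow> real) \<Rightarrow> ('x \<Rightarrow> 'a \<Rightarrow> real) \<Rightarrow> bool" where
  "policy_equiv P Q0 Q1 \<longleftrightarrow>
     (\<exists>\<eta> :: 'x \<Rightarrow> real. (\<forall>x. \<eta> x > 0) \<and> (AE x in P. \<forall>a. Q1 x a = \<eta> x * Q0 x a))"

definition H_integrand :: "real \<Rightarrow> ('x \<Rightarrow> 'a::finite \<Rightarrow> real) \<Rightarrow> ('x \<Rightarrow> 'a \<Rightarrow> real) \<Rightarrow> 'x \<Rightarrow> real" where
  "H_integrand \<gamma> Q0 Q1 x =
     (\<Sum>a\<in>UNIV. Q0 x a * Q1 x a powr \<gamma>) / ((\<Sum>a\<in>UNIV. Q1 x a powr (1 + \<gamma>)) powr (\<gamma> / (1 + \<gamma>)))"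

definition H_gamma :: "'x measure \<Rightarrow> real \<Rightarrow> ('x \<Rightarrow> 'a::finite \<Rightarrow> real) \<Rightarrow> ('x \<Rightarrow> 'a \<Rightarrow> real) \<Rightarrow> real" where
  "H_gamma P \<gamma> Q0 Q1 = - (1 / \<gamma>) * (\<integral>x. H_integrand \<gamma> Q0 Q1 x \<partial>P)"

definition D_gamma :: "'x measure \<Rightarrow> real \<Rightarrow> ('x \<Rightarrow> 'a::finite \<Rightarrow> real) \<Rightarrow> ('x \<Rightarrow> 'a \<Rightarrow> real) \<Rightarrow> real" where
  "D_gamma P \<gamma> Q0 Q1 = H_gamma P \<gamma> Q0 Q1 - H_gamma P \<gamma> Q0 Q0"

end

theory Submission
  imports Defs
begin

text \<open>Write \<open>p = 1 + \<gamma>\<close> and \<open>\<alpha> = 1 / p\<close>. At a fixed state put \<open>a = Q\<^sub>0 powr p\<close> and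
\<open>b = Q\<^sub>1 powr p\<close>. The integrand of \<open>H\<^sub>\<gamma>(Q\<^sub>0, Q\<^sub>1)\<close> is
\<open>(\<Sum> a powr \<alpha> * b powr (1 - \<alpha>)) / (\<Sum> b) powr (1 - \<alpha>)\<close>, and that of \<open>H\<^sub>\<gamma>(Q\<^sub>0, Q\<^sub>0)\<close> is
\<open>(\<Sum> a) powr \<alpha>\<close>. As \<open>\<gamma> = p\<^sup>2 \<alpha> (1 - \<alpha>)\<close>, comparing the two is Hoelder's inequality when
\<open>0 < \<alpha> < 1\<close> and the reverse Hoelder inequality otherwise. Both follow from the weighted AM-GM
inequality \<open>\<alpha> (1 - \<alpha>) (x powr \<alpha> * y powr (1 - \<alpha>) - \<alpha> x - (1 - \<alpha>) y) \<le> 0\<close>, which holds for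
every \<open>\<alpha>\<close> with equality only at \<open>x = y\<close>; this equality case forces \<open>Q\<^sub>1\<close> to be proportional
to \<open>Q\<^sub>0\<close>. Hence \<open>\<gamma>\<^sup>2 D\<^sub>\<gamma>\<close> is the integral of a nonnegative function, which vanishes almost
everywhere exactly when \<open>Q\<^sub>0 \<sim> Q\<^sub>1\<close>.\<close>

lemma powr_sub_one_sign:
  fixes z \<beta> :: real
  assumes "z > 0" "z \<noteq> 1" "\<beta> \<noteq> 0"
  shows "0 < \<beta> * (z - 1) * (z powr \<beta> - 1)"
proof -
  have "z powr \<beta> > 1 \<longleftrightarrow> \<beta> * ln z > 0" "z powr \<beta> < 1 \<longleftrightarrow> \<beta> * ln z < 0"
    using assms(1) by (simp_all add: powr_def)
  moreover have "ln z > 0 \<longleftrightarrow> z > 1" "ln z < 0 \<longleftrightarrow> z < 1" using assms(1) by simp_all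
  ultimately show ?thesis using assms
    by (auto simp: zero_less_mult_iff mult_less_0_iff)
qed

lemma Bernoulli_powr_strict:
  fixes t \<alpha> :: real
  assumes "t > 0" "t \<noteq> 1" "\<alpha> \<noteq> 0" "\<alpha> \<noteq> 1"
  shows "\<alpha> * (1 - \<alpha>) * (t powr \<alpha> - 1 - \<alpha> * (t - 1)) < 0"
proof -
  define h where "h s = s powr \<alpha> - 1 - \<alpha> * (s - 1)" for s :: real
  define h' where "h' s = \<alpha> * (s powr (\<alpha> - 1) - 1)" for s :: real
  have deriv: "DERIV h s :> h' s" if "s > 0" for s
    unfolding h_def h'_def using that
    by (auto intro!: derivative_eq_intros simp: algebra_simps)
  obtain z where z: "z > 0" "(z - 1) * (t - 1) > 0" "h t = (t - 1) * h' z"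
  proof (cases "t < 1")
    case True
    with MVT2[of t 1 h h'] assms(1) deriv obtain z where "t < z" "z < 1" "h 1 - h t = (1 - t) * h' z"
      by force
    moreover have "(z - 1) * (t - 1) > 0" using \<open>t < z\<close> \<open>z < 1\<close> by (simp add: mult_neg_neg)
    ultimately show thesis using that[of z] assms(1) by (simp add: h_def algebra_simps)
  next
    case False
    with MVT2[of 1 t h h'] assms(2) deriv obtain z where "1 < z" "z < t" "h t - h 1 = (t - 1) * h' z"
      by force
    with that[of z] show thesis by (simp add: h_def)
  qed
  have "z \<noteq> 1" using z(2) by auto
  then have "0 < ((\<alpha> - 1) * (z - 1) * (z powr (\<alpha> - 1) - 1)) * ((z - 1) * (t - 1))"
    using powr_sub_one_sign[of z "\<alpha> - 1"] z(1,2) assms(4) by simp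
  also have "\<dots> = (z - 1)\<^sup>2 * ((\<alpha> - 1) * (z powr (\<alpha> - 1) - 1) * (t - 1))"
    by (simp add: power2_eq_square algebra_simps)
  finally have "0 < (\<alpha> - 1) * (z powr (\<alpha> - 1) - 1) * (t - 1)"
    by (simp add: zero_less_mult_iff)
  then have "0 < \<alpha>\<^sup>2 * ((\<alpha> - 1) * (z powr (\<alpha> - 1) - 1) * (t - 1))"
    using assms(3) by simp
  moreover have "\<alpha> * (1 - \<alpha>) * (t powr \<alpha> - 1 - \<alpha> * (t - 1))
      = \<alpha> * (1 - \<alpha>) * ((t - 1) * (\<alpha> * (z powr (\<alpha> - 1) - 1)))"
    using z(3) by (simp add: h_def h'_def)
  moreover have "\<dots> = - (\<alpha>\<^sup>2 * ((\<alpha> - 1) * (z powr (\<alpha> - 1) - 1) * (t - 1)))"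
    by (simp add: power2_eq_square algebra_simps)
  ultimately show ?thesis by linarith
qed

lemma Young_powr_signed_less:
  fixes a b \<alpha> :: real
  assumes "a > 0" "b > 0" "a \<noteq> b" "\<alpha> \<noteq> 0" "\<alpha> \<noteq> 1"
  shows "\<alpha> * (1 - \<alpha>) * (a powr \<alpha> * b powr (1 - \<alpha>) - \<alpha> * a - (1 - \<alpha>) * b) < 0"
proof -
  have "a powr \<alpha> * b powr (1 - \<alpha>) - \<alpha> * a - (1 - \<alpha>) * b
      = b * ((a / b) powr \<alpha> - 1 - \<alpha> * (a / b - 1))"
    using assms(1,2) by (simp add: powr_divide powr_diff field_simps)
  moreover have "\<alpha> * (1 - \<alpha>) * ((a / b) powr \<alpha> - 1 - \<alpha> * (a / b - 1)) < 0"
    using assms by (intro Bernoulli_powr_strict) auto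
  ultimately show ?thesis
    using assms(2) by (simp add: mult_pos_neg mult.left_commute)
qed

lemma Young_powr_signed_le:
  fixes a b \<alpha> :: real
  assumes "a > 0" "b > 0" "\<alpha> \<noteq> 0" "\<alpha> \<noteq> 1"
  shows "\<alpha> * (1 - \<alpha>) * (a powr \<alpha> * b powr (1 - \<alpha>) - \<alpha> * a - (1 - \<alpha>) * b) \<le> 0"
proof (cases "a = b")
  case True
  then show ?thesis using assms(1) by (simp flip: powr_add add: algebra_simps)
qed (use Young_powr_signed_less assms in \<open>auto intro: less_imp_le\<close>)

lemma Holder_sum_powr_signed:
  fixes a b :: "'i \<Rightarrow> real" and \<alpha> :: real
  assumes "finite I" "I \<noteq> {}" and pos: "\<And>i. i \<in> I \<Longrightarrow> a i > 0" "\<And>i. i \<in> I \<Longrightarrow> b i > 0"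
    and "\<alpha> \<noteq> 0" "\<alpha> \<noteq> 1"
  defines "S \<equiv> (\<Sum>i\<in>I. a i powr \<alpha> * b i powr (1 - \<alpha>))"
    and "M \<equiv> (\<Sum>i\<in>I. a i) powr \<alpha> * (\<Sum>i\<in>I. b i) powr (1 - \<alpha>)"
  shows "\<alpha> * (1 - \<alpha>) * S \<le> \<alpha> * (1 - \<alpha>) * M"
    and "S = M \<longleftrightarrow> (\<exists>c>0. \<forall>i\<in>I. b i = c * a i)"
proof -
  define A where "A = (\<Sum>i\<in>I. a i)"
  define B where "B = (\<Sum>i\<in>I. b i)"
  have "A > 0" "B > 0"
    unfolding A_def B_def using assms(1,2) pos by (auto intro: sum_pos)
  then have "M > 0" by (simp add: M_def A_def B_def)
  define Y where "Y i = \<alpha> * (1 - \<alpha>) * ((a i / A) powr \<alpha> * (b i / B) powr (1 - \<alpha>)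
                           - \<alpha> * (a i / A) - (1 - \<alpha>) * (b i / B))" for i
  have Y_le: "Y i \<le> 0" if "i \<in> I" for i
    unfolding Y_def using pos[OF that] \<open>A > 0\<close> \<open>B > 0\<close> assms(5,6)
    by (intro Young_powr_signed_le) auto
  have "(\<Sum>i\<in>I. Y i) = \<alpha> * (1 - \<alpha>) * (S / M - \<alpha> * (A / A) - (1 - \<alpha>) * (B / B))"
    by (simp add: Y_def S_def M_def A_def B_def powr_divide sum_distrib_left[symmetric]
          sum_subtractf sum_divide_distrib[symmetric])
  then have sum_Y: "\<alpha> * (1 - \<alpha>) * (S - M) = M * (\<Sum>i\<in>I. Y i)"
    using \<open>A > 0\<close> \<open>B > 0\<close> by (simp add: M_def A_def[symmetric] B_def[symmetric] field_simps)
  have "M * (\<Sum>i\<in>I. Y i) \<le> 0"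
    using \<open>M > 0\<close> Y_le by (simp add: mult_nonneg_nonpos sum_nonpos)
  then show "\<alpha> * (1 - \<alpha>) * S \<le> \<alpha> * (1 - \<alpha>) * M"
    using sum_Y by (simp add: right_diff_distrib)
  show "S = M \<longleftrightarrow> (\<exists>c>0. \<forall>i\<in>I. b i = c * a i)"
  proof
    assume "S = M"
    show "\<exists>c>0. \<forall>i\<in>I. b i = c * a i"
    proof (intro exI conjI ballI)
      show "B / A > 0" using \<open>A > 0\<close> \<open>B > 0\<close> by simp
      fix i assume "i \<in> I"
      have "(\<Sum>i\<in>I. - Y i) = 0" using sum_Y \<open>M > 0\<close> \<open>S = M\<close> by (simp add: sum_negf)
      then have "Y i = 0" using Y_le assms(1) \<open>i \<in> I\<close> by (subst (asm) sum_nonneg_eq_0_iff) auto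
      then have "a i / A = b i / B"
        using Young_powr_signed_less[of "a i / A" "b i / B" \<alpha>] pos[OF \<open>i \<in> I\<close>] \<open>A > 0\<close> \<open>B > 0\<close>
          assms(5,6) unfolding Y_def by force
      then show "b i = B / A * a i" using \<open>A > 0\<close> \<open>B > 0\<close> by (simp add: field_simps)
    qed
  next
    assume "\<exists>c>0. \<forall>i\<in>I. b i = c * a i"
    then obtain c where "c > 0" and b: "\<And>i. i \<in> I \<Longrightarrow> b i = c * a i" by blast
    have "S = (\<Sum>i\<in>I. c powr (1 - \<alpha>) * a i)"
      unfolding S_def using pos(1) \<open>c > 0\<close>
      by (intro sum.cong) (simp_all add: b powr_mult abs_of_pos flip: powr_add)
    also have "\<dots> = M"
      using \<open>A > 0\<close> \<open>c > 0\<close>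
      by (simp add: M_def b sum_distrib_left[symmetric] A_def[symmetric] powr_mult flip: powr_add)
    finally show "S = M" .
  qed
qed

lemma proportional_powr_iff:
  fixes u v :: "'i \<Rightarrow> real"
  assumes "\<And>i. u i > 0" "\<And>i. v i > 0" "p \<noteq> 0"
  shows "(\<exists>c>0. \<forall>i. v i powr p = c * u i powr p) \<longleftrightarrow> (\<exists>c>0. \<forall>i. v i = c * u i)"
proof
  assume "\<exists>c>0. \<forall>i. v i powr p = c * u i powr p"
  then obtain c where "c > 0" and c: "\<And>i. v i powr p = c * u i powr p" by blast
  have "v i = c powr (1 / p) * u i" for i
  proof -
    have "v i = (v i powr p) powr (1 / p)" using assms(2)[of i] assms(3) by (simp add: powr_powr)
    also have "\<dots> = c powr (1 / p) * u i"
      using assms(1)[of i] assms(3) \<open>c > 0\<close> by (simp add: c powr_mult powr_powr)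
    finally show ?thesis .
  qed
  then show "\<exists>c>0. \<forall>i. v i = c * u i" using \<open>c > 0\<close> by (intro exI[of _ "c powr (1 / p)"]) auto
next
  assume "\<exists>c>0. \<forall>i. v i = c * u i"
  then obtain c where "c > 0" and "\<And>i. v i = c * u i" by blast
  then show "\<exists>c>0. \<forall>i. v i powr p = c * u i powr p"
    by (intro exI[of _ "c powr p"]) (simp add: powr_mult)
qed

lemma H_integrand_Holder_form:
  fixes Q0 Q1 :: "'x \<Rightarrow> 'a::finite \<Rightarrow> real"
  assumes "\<And>a. Q0 x a > 0" "\<And>a. Q1 x a > 0" "\<gamma> \<noteq> -1"
  defines "\<alpha> \<equiv> 1 / (1 + \<gamma>)"
  shows "H_integrand \<gamma> Q0 Q1 x =
    (\<Sum>a\<in>UNIV. (Q0 x a powr (1 + \<gamma>)) powr \<alpha> * (Q1 x a powr (1 + \<gamma>)) powr (1 - \<alpha>))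
      / (\<Sum>a\<in>UNIV. Q1 x a powr (1 + \<gamma>)) powr (1 - \<alpha>)"
proof -
  have "1 + \<gamma> \<noteq> 0" "1 - \<alpha> = \<gamma> / (1 + \<gamma>)"
    using assms(3) by (auto simp: \<alpha>_def field_simps)
  then show ?thesis
    using assms(1,2) by (simp add: H_integrand_def \<alpha>_def powr_powr abs_of_pos)
qed

lemma H_integrand_cross_le_self:
  fixes Q0 Q1 :: "'x \<Rightarrow> 'a::finite \<Rightarrow> real"
  assumes Q0: "\<And>a. Q0 x a > 0" and Q1: "\<And>a. Q1 x a > 0" and "\<gamma> \<noteq> 0" "\<gamma> \<noteq> -1"
  shows "\<gamma> * H_integrand \<gamma> Q0 Q1 x \<le> \<gamma> * H_integrand \<gamma> Q0 Q0 x"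
    and "H_integrand \<gamma> Q0 Q1 x = H_integrand \<gamma> Q0 Q0 x \<longleftrightarrow> (\<exists>c>0. \<forall>a. Q1 x a = c * Q0 x a)"
proof -
  define \<alpha> where "\<alpha> = 1 / (1 + \<gamma>)"
  define f0 f1 where "f0 a = Q0 x a powr (1 + \<gamma>)" and "f1 a = Q1 x a powr (1 + \<gamma>)" for a
  define S where "S = (\<Sum>a\<in>UNIV. f0 a powr \<alpha> * f1 a powr (1 - \<alpha>))"
  define M where "M = (\<Sum>a\<in>UNIV. f0 a) powr \<alpha> * (\<Sum>a\<in>UNIV. f1 a) powr (1 - \<alpha>)"
  define K where "K = (\<Sum>a\<in>UNIV. f1 a) powr (1 - \<alpha>)"
  have "1 + \<gamma> \<noteq> 0" using assms(4) by linarith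
  moreover have "1 - \<alpha> = \<gamma> / (1 + \<gamma>)"
    using \<open>1 + \<gamma> \<noteq> 0\<close> by (simp add: \<alpha>_def field_simps)
  ultimately have "\<alpha> \<noteq> 0" "\<alpha> \<noteq> 1" and \<alpha>_\<gamma>: "\<alpha> * (1 - \<alpha>) = \<gamma> / (1 + \<gamma>)\<^sup>2"
    using assms(3) by (simp_all add: \<alpha>_def power2_eq_square)
  have f_pos: "f0 a > 0" "f1 a > 0" for a
    using Q0[of a] Q1[of a] by (simp_all add: f0_def f1_def)
  then have "(\<Sum>a\<in>UNIV. f0 a) > 0" "(\<Sum>a\<in>UNIV. f1 a) > 0" by (simp_all add: sum_pos)
  then have "K > 0" by (simp add: K_def)
  have H01: "H_integrand \<gamma> Q0 Q1 x = S / K"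
    using H_integrand_Holder_form[of Q0 x Q1, OF Q0 Q1 assms(4)]
    by (simp add: S_def K_def f0_def f1_def \<alpha>_def)
  have "H_integrand \<gamma> Q0 Q0 x = (\<Sum>a\<in>UNIV. f0 a) / (\<Sum>a\<in>UNIV. f0 a) powr (1 - \<alpha>)"
    using H_integrand_Holder_form[of Q0 x Q0, OF Q0 Q0 assms(4)] f_pos
    by (simp add: f0_def \<alpha>_def flip: powr_add)
  also have "\<dots> = M / K"
    using \<open>(\<Sum>a\<in>UNIV. f0 a) > 0\<close> \<open>(\<Sum>a\<in>UNIV. f1 a) > 0\<close>
    by (simp add: M_def K_def powr_diff)
  finally have H00: "H_integrand \<gamma> Q0 Q0 x = M / K" .
  note Holder = Holder_sum_powr_signed[of UNIV f0 f1 \<alpha>, folded S_def M_def]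
  have "\<gamma> / (1 + \<gamma>)\<^sup>2 * S \<le> \<gamma> / (1 + \<gamma>)\<^sup>2 * M"
    using Holder(1) f_pos \<open>\<alpha> \<noteq> 0\<close> \<open>\<alpha> \<noteq> 1\<close> by (simp add: \<alpha>_\<gamma>)
  then have "(1 + \<gamma>)\<^sup>2 / K * (\<gamma> / (1 + \<gamma>)\<^sup>2 * S) \<le> (1 + \<gamma>)\<^sup>2 / K * (\<gamma> / (1 + \<gamma>)\<^sup>2 * M)"
    by (rule mult_left_mono) (use \<open>K > 0\<close> in simp)
  moreover have "(1 + \<gamma>)\<^sup>2 / K * (\<gamma> / (1 + \<gamma>)\<^sup>2 * T) = \<gamma> * (T / K)" for T
    using \<open>1 + \<gamma> \<noteq> 0\<close> by simp
  ultimately show "\<gamma> * H_integrand \<gamma> Q0 Q1 x \<le> \<gamma> * H_integrand \<gamma> Q0 Q0 x"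
    by (simp add: H01 H00)
  have "H_integrand \<gamma> Q0 Q1 x = H_integrand \<gamma> Q0 Q0 x \<longleftrightarrow> S = M"
    using \<open>K > 0\<close> by (simp add: H01 H00)
  also have "\<dots> \<longleftrightarrow> (\<exists>c>0. \<forall>a. f1 a = c * f0 a)"
    using Holder(2) f_pos \<open>\<alpha> \<noteq> 0\<close> \<open>\<alpha> \<noteq> 1\<close> by simp
  also have "\<dots> \<longleftrightarrow> (\<exists>c>0. \<forall>a. Q1 x a = c * Q0 x a)"
    unfolding f0_def f1_def using proportional_powr_iff[OF Q0 Q1 \<open>1 + \<gamma> \<noteq> 0\<close>] .
  finally show "H_integrand \<gamma> Q0 Q1 x = H_integrand \<gamma> Q0 Q0 x
      \<longleftrightarrow> (\<exists>c>0. \<forall>a. Q1 x a = c * Q0 x a)" .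
qed

lemma policy_equiv_iff_AE_proportional:
  fixes Q0 Q1 :: "'x \<Rightarrow> 'a \<Rightarrow> real"
  assumes Q0: "\<And>x a. Q0 x a > 0" and Q1: "\<And>x a. Q1 x a > 0"
  shows "policy_equiv P Q0 Q1 \<longleftrightarrow> (AE x in P. \<exists>c>0. \<forall>a. Q1 x a = c * Q0 x a)"
proof
  assume "policy_equiv P Q0 Q1"
  then obtain \<eta> where "\<forall>x. \<eta> x > 0" and "AE x in P. \<forall>a. Q1 x a = \<eta> x * Q0 x a"
    unfolding policy_equiv_def by blast
  then show "AE x in P. \<exists>c>0. \<forall>a. Q1 x a = c * Q0 x a"
    by (auto elim!: eventually_mono)
next
  assume proportional: "AE x in P. \<exists>c>0. \<forall>a. Q1 x a = c * Q0 x a"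
  fix a\<^sub>0 :: 'a
  define \<eta> where "\<eta> x = Q1 x a\<^sub>0 / Q0 x a\<^sub>0" for x
  have "\<forall>x. \<eta> x > 0" using Q0 Q1 by (simp add: \<eta>_def)
  moreover have "AE x in P. \<forall>a. Q1 x a = \<eta> x * Q0 x a"
    using proportional by eventually_elim (auto simp: \<eta>_def less_imp_neq[OF Q0, symmetric])
  ultimately show "policy_equiv P Q0 Q1"
    unfolding policy_equiv_def by blast
qed

lemma D_gamma_eq_integral:
  assumes "integrable P (H_integrand \<gamma> Q0 Q1)" "integrable P (H_integrand \<gamma> Q0 Q0)" "\<gamma> \<noteq> 0"
  shows "D_gamma P \<gamma> Q0 Q1
    = (\<integral>x. \<gamma> * H_integrand \<gamma> Q0 Q0 x - \<gamma> * H_integrand \<gamma> Q0 Q1 x \<partial>P) / \<gamma>\<^sup>2"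
  using assms by (simp add: D_gamma_def H_gamma_def power2_eq_square field_simps)

theorem theorem1:
  fixes P :: "'x measure" and Q0 Q1 :: "'x \<Rightarrow> 'a::finite \<Rightarrow> real" and \<gamma> :: real
  assumes "prob_space P"
    and "Q_function P Q0" and "Q_function P Q1"
    and "\<gamma> \<noteq> 0" and "\<gamma> \<noteq> -1"
    and "integrable P (H_integrand \<gamma> Q0 Q1)"
    and "integrable P (H_integrand \<gamma> Q0 Q0)"
  shows "D_gamma P \<gamma> Q0 Q1 \<ge> 0 \<and> (D_gamma P \<gamma> Q0 Q1 = 0 \<longleftrightarrow> policy_equiv P Q0 Q1)"
proof -
  have Q0: "\<And>x a. Q0 x a > 0" and Q1: "\<And>x a. Q1 x a > 0"
    using assms(2,3) by (auto simp: Q_function_def)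
  define R where "R x = \<gamma> * H_integrand \<gamma> Q0 Q0 x - \<gamma> * H_integrand \<gamma> Q0 Q1 x" for x
  have R_nonneg: "R x \<ge> 0" for x
    using H_integrand_cross_le_self(1)[of Q0 x Q1, OF Q0 Q1 assms(4,5)] by (simp add: R_def)
  have "integrable P R"
    unfolding R_def using assms(6,7) by (intro Bochner_Integration.integrable_diff integrable_mult_right)
  have D: "D_gamma P \<gamma> Q0 Q1 = (\<integral>x. R x \<partial>P) / \<gamma>\<^sup>2"
    unfolding R_def using assms(6,7,4) by (rule D_gamma_eq_integral)
  have "D_gamma P \<gamma> Q0 Q1 = 0 \<longleftrightarrow> (\<integral>x. R x \<partial>P) = 0"
    using assms(4) by (simp add: D)
  also have "\<dots> \<longleftrightarrow> (AE x in P. R x = 0)"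
    using \<open>integrable P R\<close> R_nonneg by (intro integral_nonneg_eq_0_iff_AE) auto
  also have "\<dots> \<longleftrightarrow> (AE x in P. \<exists>c>0. \<forall>a. Q1 x a = c * Q0 x a)"
  proof -
    have "R x = 0 \<longleftrightarrow> H_integrand \<gamma> Q0 Q1 x = H_integrand \<gamma> Q0 Q0 x" for x
      using assms(4) by (auto simp: R_def)
    then show ?thesis
      using H_integrand_cross_le_self(2)[of Q0 _ Q1, OF Q0 Q1 assms(4,5)] by simp
  qed
  also have "\<dots> \<longleftrightarrow> policy_equiv P Q0 Q1"
    using policy_equiv_iff_AE_proportional[of Q0 Q1 P] Q0 Q1 by blast
  finally show ?thesis
    using R_nonneg by (simp add: D integral_nonneg_AE)
qed

end
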